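(* Let $G$ be a necklace based on the cycle $C_n$, i.e. $G$ is obtained from $C_n$ by attaching, at each vertex $i$ of $C_n$ ($i=1,\dots,n$), a cycle $C^i$ that meets the rest of the graph only in the vertex $i$. Then $$\mathrm{vol}(G)=\mathrm{vol}(C_n)\prod_{i=1}^n\mathrm{vol}(C^i).$$
   Context: For a finite simple undirected graph $G=(V,E)$ with $V=[n]$, and $S\subseteq[n-1]$, the cut vector $x^S\in\mathbb{R}^{|E|}$ has coordinates $x^S_{ij}=1$ if $|\{i,j\}\cap S|=1$ and $x^S_{ij}=0$ otherwise, for each edge $(i,j)\in E$. The cut polytope is $\mathrm{Cut}(G)=\mathrm{conv}\{x^S: S\subseteq[n-1]\}\subset\mathbb{R}^{|E|}$, and $\mathrm{vol}(G)$ denotes the $|E|$-dimensional Lebesgue volume of $\mathrm{Cut}(G)$. *)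

theory Defs
  imports "HOL-Probability.Probability"
begin

text \<open>Graphs: a vertex set V and a set E of edges, each edge a 2-element subset of V.
  Coordinates of R^E are indexed by the edges; a point of R^E is an (extensional)
  function on E, and Lebesgue measure on R^E is the product of Lebesgue measures.\<close>

definition cut_vector :: "'v set set \<Rightarrow> 'v set \<Rightarrow> ('v set \<Rightarrow> real)" where
  "cut_vector E S = (\<lambda>e\<in>E. if card (e \<inter> S) = 1 then 1 else 0)"

definition cut_polytope :: "'v set \<Rightarrow> 'v set set \<Rightarrow> ('v set \<Rightarrow> real) set" where
  "cut_polytope V E =
     {x. \<exists>u :: 'v set \<Rightarrow> real.
           (\<forall>S\<in>Pow V. 0 \<le> u S) \<and> (\<Sum>S\<in>Pow V. u S) = 1 \<and>
           x = (\<lambda>e\<in>E. \<Sum>S\<in>Pow V. u S * cut_vector E S e)}"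

definition cut_volume :: "'v set \<Rightarrow> 'v set set \<Rightarrow> real" where
  "cut_volume V E = measure (PiM E (\<lambda>_. lborel)) (cut_polytope V E)"

definition is_cycle :: "'v set \<Rightarrow> 'v set set \<Rightarrow> bool" where
  "is_cycle W F \<longleftrightarrow> (\<exists>m f. 3 \<le> m \<and> bij_betw f {0..<m} W \<and>
       F = {{f k, f (Suc k mod m)} | k. k < m})"

end

theory Submission
  imports Defs
begin

(* If two graphs share at most one vertex w, then Cut(G1 \<union> G2) is the product
   Cut(G1) \<times> Cut(G2) in R^E1 \<times> R^E2.  A cut of the union restricts to cuts of the two parts;
   conversely, cuts T1 of G1 and T2 of G2 glue to the cut T1 \<union> T2 of the union once T2 is
   replaced, if necessary, by its complement in V2 (which has the same cut vector) so that both
   agree at w, and convex combinations glue with product weights.  Hence the volume of the union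
   is the product of the volumes, and the necklace is built from C_n by attaching the cycles C^i
   one at a time. *)

(* The function space carries the product topology but no t2_space instance,
   so compact_imp_closed does not apply to it directly. *)
lemma compact_imp_closed_fun:
  fixes C :: "('a \<Rightarrow> 'b::metric_space) set"
  assumes "compact C"
  shows "closed C"
proof -
  have "Hausdorff_space (euclidean :: ('a \<Rightarrow> 'b) topology)"
    unfolding euclidean_product_topology[symmetric] by (simp add: Hausdorff_space_product_topology)
  then show ?thesis
    using compactin_imp_closedin[of euclidean C] assms by simp
qed

lemma compact_simplex_PiE:
  "compact {u :: 'a \<Rightarrow> real. u \<in> PiE A (\<lambda>_. {0..1}) \<and> sum u A = 1}"
proof -
  have "PiE A (\<lambda>_. {0..1::real}) = PiE UNIV (\<lambda>i. if i \<in> A then {0..1} else {undefined})"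
    by (auto simp: PiE_iff extensional_def split: if_splits)
  moreover have "compactin (product_topology (\<lambda>_. euclidean) UNIV)
      (PiE UNIV (\<lambda>i. if i \<in> A then {0..1::real} else {undefined}))"
    by (subst compactin_PiE) auto
  ultimately have "compact (PiE A (\<lambda>_. {0..1::real}))"
    by (simp add: euclidean_product_topology)
  moreover have "closed {u :: 'a \<Rightarrow> real. sum u A = 1}"
    by (intro closed_Collect_eq continuous_intros continuous_on_sum) auto
  ultimately have "compact (PiE A (\<lambda>_. {0..1}) \<inter> {u :: 'a \<Rightarrow> real. sum u A = 1})"
    by (rule compact_Int_closed)
  then show ?thesis
    by (simp add: Int_def)
qed

(* Transport to nat \<Rightarrow> real, where the product and Borel \<sigma>-algebras coincide. *)
lemma sets_PiM_lborel_closed: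
  fixes C :: "('i \<Rightarrow> real) set"
  assumes "countable I" and "closed C"
  shows "C \<inter> space (PiM I (\<lambda>_. lborel)) \<in> sets (PiM I (\<lambda>_. lborel))"
proof (cases "I = {}")
  case True
  then show ?thesis by (simp add: PiM_empty)
next
  case False
  define embed :: "(nat \<Rightarrow> real) \<Rightarrow> 'i \<Rightarrow> real" where "embed y = (\<lambda>i\<in>I. y (to_nat_on I i))" for y
  define coords :: "('i \<Rightarrow> real) \<Rightarrow> nat \<Rightarrow> real" where "coords x = (\<lambda>k. x (from_nat_into I k))" for x
  have "continuous_on UNIV embed"
    unfolding embed_def
  proof (intro continuous_on_coordinatewise_then_product)
    fix i
    show "continuous_on UNIV (\<lambda>y. (\<lambda>i\<in>I. y (to_nat_on I i)) i)"
      by (cases "i \<in> I") simp_all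
  qed
  then have "embed -` C \<in> sets (PiM UNIV (\<lambda>_. borel))"
    using assms(2) by (simp add: sets_PiM_equal_borel borel_closed closed_vimage)
  moreover have "coords \<in> measurable (PiM I (\<lambda>_. lborel)) (PiM UNIV (\<lambda>_. borel))"
    unfolding coords_def using from_nat_into[OF False]
    by (intro measurable_PiM_single') (auto simp: space_PiM)
  ultimately have "coords -` (embed -` C) \<inter> space (PiM I (\<lambda>_. lborel)) \<in> sets (PiM I (\<lambda>_. lborel))"
    by (rule measurable_sets[rotated])
  moreover have "embed (coords x) = x" if "x \<in> space (PiM I (\<lambda>_. lborel))" for x
    using that assms(1) by (auto simp: embed_def coords_def space_PiM PiE_def extensional_def)
  then have "coords -` (embed -` C) \<inter> space (PiM I (\<lambda>_. lborel)) = C \<inter> space (PiM I (\<lambda>_. lborel))"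
    by auto
  ultimately show ?thesis
    by simp
qed

lemma (in product_sigma_finite) measure_PiM_Un_restrict:
  assumes disj: "I \<inter> J = {}" and "finite I" "finite J"
    and A: "A \<in> sets (PiM I M)" and B: "B \<in> sets (PiM J M)"
  shows "measure (PiM (I \<union> J) M)
      {x \<in> space (PiM (I \<union> J) M). restrict x I \<in> A \<and> restrict x J \<in> B}
    = measure (PiM I M) A * measure (PiM J M) B"
proof -
  interpret J: finite_product_sigma_finite M J by standard fact
  let ?X = "{x \<in> space (PiM (I \<union> J) M). restrict x I \<in> A \<and> restrict x J \<in> B}"
  have X: "?X \<in> sets (PiM (I \<union> J) M)"
    using A B by measurable
  have restrict_id: "restrict x K = x" if "x \<in> space (PiM K M)" for x K
    using that by (simp add: space_PiM PiE_restrict)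
  have "merge I J -` ?X \<inter> space (PiM I M \<Otimes>\<^sub>M PiM J M) = A \<times> B"
  proof (intro equalityI subsetI)
    fix p assume "p \<in> merge I J -` ?X \<inter> space (PiM I M \<Otimes>\<^sub>M PiM J M)"
    then show "p \<in> A \<times> B"
      using disj by (auto simp: space_pair_measure restrict_id)
  next
    fix p assume "p \<in> A \<times> B"
    moreover have "merge I J p \<in> space (PiM (I \<union> J) M)" if "p \<in> space (PiM I M \<Otimes>\<^sub>M PiM J M)"
      using measurable_space[OF measurable_merge that] .
    ultimately show "p \<in> merge I J -` ?X \<inter> space (PiM I M \<Otimes>\<^sub>M PiM J M)"
      using disj sets.sets_into_space[OF A] sets.sets_into_space[OF B]
      by (auto simp: space_pair_measure restrict_id)
  qed
  then have "measure (distr (PiM I M \<Otimes>\<^sub>M PiM J M) (PiM (I \<union> J) M) (merge I J)) ?X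
      = measure (PiM I M \<Otimes>\<^sub>M PiM J M) (A \<times> B)"
    using X by (simp add: measure_distr)
  then have "measure (PiM (I \<union> J) M) ?X = measure (PiM I M \<Otimes>\<^sub>M PiM J M) (A \<times> B)"
    by (simp only: distr_merge[OF assms(1-3)])
  also have "\<dots> = measure (PiM I M) A * measure (PiM J M) B"
    using J.emeasure_pair_measure_Times[OF A B] by (simp add: measure_def enn2real_mult)
  finally show ?thesis .
qed

lemma cut_vector_Int_eq:
  assumes "e \<in> E" "e \<in> E'" "e \<subseteq> V"
  shows "cut_vector E S e = cut_vector E' (S \<inter> V) e"
proof -
  have "e \<inter> (S \<inter> V) = e \<inter> S" using assms(3) by auto
  then show ?thesis using assms(1,2) by (simp add: cut_vector_def)
qed

lemma cut_vector_Diff_eq: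
  assumes "e \<in> E" "e \<subseteq> V" "card e = 2"
  shows "cut_vector E (V - T) e = cut_vector E T e"
proof -
  have "finite e" using assms(3) card.infinite by fastforce
  moreover have "e \<inter> (V - T) = e - e \<inter> T" using assms(2) by auto
  ultimately have "card (e \<inter> (V - T)) = 2 - card (e \<inter> T)"
    using assms(3) by (simp add: card_Diff_subset)
  then have "card (e \<inter> (V - T)) = 1 \<longleftrightarrow> card (e \<inter> T) = 1" by auto
  then show ?thesis using assms(1) by (simp add: cut_vector_def)
qed

lemma convex_combination_in_cut_polytope:
  assumes "finite V" "finite P" "\<sigma> ` P \<subseteq> Pow V"
    and "\<forall>p\<in>P. 0 \<le> c p" "sum c P = 1"
  shows "(\<lambda>e\<in>E. \<Sum>p\<in>P. c p * cut_vector E (\<sigma> p) e) \<in> cut_polytope V E"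
proof -
  define u where "u S = (\<Sum>p\<in>{p \<in> P. \<sigma> p = S}. c p)" for S
  have regroup: "(\<Sum>S\<in>Pow V. u S * h S) = (\<Sum>p\<in>P. c p * h (\<sigma> p))" for h :: "'a set \<Rightarrow> real"
  proof -
    have "(\<Sum>S\<in>Pow V. u S * h S) = (\<Sum>S\<in>Pow V. \<Sum>p\<in>{p \<in> P. \<sigma> p = S}. c p * h (\<sigma> p))"
      unfolding u_def sum_distrib_right by (intro sum.cong refl) auto
    also have "\<dots> = (\<Sum>p\<in>P. c p * h (\<sigma> p))"
      using assms(1-3) by (intro sum.group) auto
    finally show ?thesis .
  qed
  have "\<forall>S\<in>Pow V. 0 \<le> u S"
    unfolding u_def using assms(4) by (auto intro: sum_nonneg)
  moreover have "(\<Sum>S\<in>Pow V. u S) = 1"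
    using regroup[of "\<lambda>_. 1"] assms(5) by simp
  moreover have "(\<lambda>e\<in>E. \<Sum>p\<in>P. c p * cut_vector E (\<sigma> p) e) = (\<lambda>e\<in>E. \<Sum>S\<in>Pow V. u S * cut_vector E S e)"
    using regroup by simp
  ultimately show ?thesis
    unfolding cut_polytope_def by blast
qed

lemma restrict_in_cut_polytope:
  assumes "finite V" "V' \<subseteq> V" "E' \<subseteq> E" "\<forall>e\<in>E'. e \<subseteq> V'"
    and "x \<in> cut_polytope V E"
  shows "restrict x E' \<in> cut_polytope V' E'"
proof -
  obtain u where u: "\<forall>S\<in>Pow V. 0 \<le> u S" "(\<Sum>S\<in>Pow V. u S) = 1"
    and x: "x = (\<lambda>e\<in>E. \<Sum>S\<in>Pow V. u S * cut_vector E S e)"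
    using assms(5) unfolding cut_polytope_def by blast
  have "restrict x E' = (\<lambda>e\<in>E'. \<Sum>S\<in>Pow V. u S * cut_vector E' (S \<inter> V') e)"
    using assms(3,4) by (auto simp: x subsetD cut_vector_Int_eq[of _ E E' V'] intro!: sum.cong)
  also have "\<dots> \<in> cut_polytope V' E'"
    using assms(1,2) u finite_subset by (intro convex_combination_in_cut_polytope) auto
  finally show ?thesis .
qed

lemma cut_polytope_eq_image:
  "cut_polytope V E = (\<lambda>u. \<lambda>e\<in>E. \<Sum>S\<in>Pow V. u S * cut_vector E S e) `
     {u \<in> PiE (Pow V) (\<lambda>_. {0..1}). sum u (Pow V) = 1}"
proof (intro equalityI subsetI)
  fix x assume "x \<in> cut_polytope V E"
  then obtain u where u: "\<forall>S\<in>Pow V. 0 \<le> u S" "(\<Sum>S\<in>Pow V. u S) = 1"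
    and x: "x = (\<lambda>e\<in>E. \<Sum>S\<in>Pow V. u S * cut_vector E S e)"
    unfolding cut_polytope_def by blast
  then have "finite (Pow V)"
    by (metis sum.infinite zero_neq_one)
  then have "u S \<le> 1" if "S \<in> Pow V" for S
    using member_le_sum[of S "Pow V" u] u that by auto
  then show "x \<in> (\<lambda>u. \<lambda>e\<in>E. \<Sum>S\<in>Pow V. u S * cut_vector E S e) `
      {u \<in> PiE (Pow V) (\<lambda>_. {0..1}). sum u (Pow V) = 1}"
    using u x by (intro image_eqI[where x = "restrict u (Pow V)"]) auto
qed (auto simp: cut_polytope_def PiE_iff)

lemma compact_cut_polytope: "compact (cut_polytope V E)"
proof -
  let ?D = "{u \<in> PiE (Pow V) (\<lambda>_. {0..1}). sum u (Pow V) = 1}"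
  have "continuous_on ?D (\<lambda>u. \<lambda>e\<in>E. \<Sum>S\<in>Pow V. u S * cut_vector E S e)"
  proof (intro continuous_on_coordinatewise_then_product)
    fix e
    show "continuous_on ?D (\<lambda>u. (\<lambda>e\<in>E. \<Sum>S\<in>Pow V. u S * cut_vector E S e) e)"
      by (cases "e \<in> E")
        (simp_all add: continuous_on_sum continuous_on_mult_right
          continuous_on_subset[OF continuous_on_product_coordinates])
  qed
  then show ?thesis
    unfolding cut_polytope_eq_image using compact_simplex_PiE by (rule compact_continuous_image)
qed

lemma cut_polytope_subset_space: "cut_polytope V E \<subseteq> space (PiM E (\<lambda>_. lborel))"
  by (auto simp: cut_polytope_def space_PiM)

lemma sets_cut_polytope:
  assumes "countable E"
  shows "cut_polytope V E \<in> sets (PiM E (\<lambda>_. lborel))"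
  using sets_PiM_lborel_closed[OF assms compact_imp_closed_fun[OF compact_cut_polytope[of V E]]]
  by (simp add: Int_absorb2[OF cut_polytope_subset_space])

definition simple_graph :: "'v set \<Rightarrow> 'v set set \<Rightarrow> bool" where
  "simple_graph V E \<longleftrightarrow> finite V \<and> (\<forall>e\<in>E. e \<subseteq> V \<and> card e = 2)"

definition glue_cut :: "'v set \<Rightarrow> 'v set \<Rightarrow> 'v set \<Rightarrow> 'v set \<Rightarrow> 'v set" where
  "glue_cut V1 V2 T1 T2 = T1 \<union> (if T1 \<inter> V2 = T2 \<inter> V1 then T2 else V2 - T2)"

lemma cut_vector_glue_cut:
  assumes "simple_graph V1 E1" "simple_graph V2 E2" "V1 \<inter> V2 \<subseteq> {w}"
    and "T1 \<subseteq> V1" "T2 \<subseteq> V2"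
  shows "e \<in> E1 \<Longrightarrow> cut_vector (E1 \<union> E2) (glue_cut V1 V2 T1 T2) e = cut_vector E1 T1 e"
    and "e \<in> E2 \<Longrightarrow> cut_vector (E1 \<union> E2) (glue_cut V1 V2 T1 T2) e = cut_vector E2 T2 e"
proof -
  let ?T = "glue_cut V1 V2 T1 T2"
  have left: "?T \<inter> V1 = T1" and right: "?T \<inter> V2 = (if T1 \<inter> V2 = T2 \<inter> V1 then T2 else V2 - T2)"
    using assms(3-5) by (auto simp: glue_cut_def)
  show "cut_vector (E1 \<union> E2) ?T e = cut_vector E1 T1 e" if "e \<in> E1"
    using that assms(1) left cut_vector_Int_eq[of e "E1 \<union> E2" E1 V1 ?T]
    by (auto simp: simple_graph_def)
  show "cut_vector (E1 \<union> E2) ?T e = cut_vector E2 T2 e" if "e \<in> E2"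
    using that assms(2) right cut_vector_Int_eq[of e "E1 \<union> E2" E2 V2 ?T] cut_vector_Diff_eq[of e E2 V2 T2]
    by (auto simp: simple_graph_def split: if_splits)
qed

lemma glue_in_cut_polytope:
  assumes "simple_graph V1 E1" "simple_graph V2 E2" "V1 \<inter> V2 \<subseteq> {w}"
    and x: "x \<in> space (PiM (E1 \<union> E2) (\<lambda>_. lborel))"
    and "restrict x E1 \<in> cut_polytope V1 E1" "restrict x E2 \<in> cut_polytope V2 E2"
  shows "x \<in> cut_polytope (V1 \<union> V2) (E1 \<union> E2)"
proof -
  obtain a where a: "\<forall>S\<in>Pow V1. 0 \<le> a S" "(\<Sum>S\<in>Pow V1. a S) = 1"
    and xa: "restrict x E1 = (\<lambda>e\<in>E1. \<Sum>S\<in>Pow V1. a S * cut_vector E1 S e)"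
    using assms(5) unfolding cut_polytope_def by blast
  obtain b where b: "\<forall>S\<in>Pow V2. 0 \<le> b S" "(\<Sum>S\<in>Pow V2. b S) = 1"
    and xb: "restrict x E2 = (\<lambda>e\<in>E2. \<Sum>S\<in>Pow V2. b S * cut_vector E2 S e)"
    using assms(6) unfolding cut_polytope_def by blast
  let ?P = "Pow V1 \<times> Pow V2" and ?E = "E1 \<union> E2"
  define c where "c = (\<lambda>(T1, T2). a T1 * b T2)"
  define \<sigma> where "\<sigma> = (\<lambda>(T1, T2). glue_cut V1 V2 T1 T2)"
  have sum_P: "(\<Sum>p\<in>?P. c p * h p) = (\<Sum>T1\<in>Pow V1. \<Sum>T2\<in>Pow V2. a T1 * b T2 * h (T1, T2))" for h
    by (simp add: c_def sum.cartesian_product split_def)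
  have "x e = (\<Sum>p\<in>?P. c p * cut_vector ?E (\<sigma> p) e)" if "e \<in> ?E" for e
  proof (cases "e \<in> E1")
    case True
    have "(\<Sum>p\<in>?P. c p * cut_vector ?E (\<sigma> p) e)
        = (\<Sum>T1\<in>Pow V1. \<Sum>T2\<in>Pow V2. a T1 * b T2 * cut_vector E1 T1 e)"
      unfolding sum_P \<sigma>_def using cut_vector_glue_cut(1)[OF assms(1-3) _ _ True] by simp
    also have "\<dots> = x e"
      using fun_cong[OF xa, of e] True b(2) by (simp add: sum_distrib_left[symmetric] mult.commute)
    finally show ?thesis ..
  next
    case False
    then have "e \<in> E2" using that by simp
    have "(\<Sum>p\<in>?P. c p * cut_vector ?E (\<sigma> p) e)
        = (\<Sum>T1\<in>Pow V1. \<Sum>T2\<in>Pow V2. a T1 * b T2 * cut_vector E2 T2 e)"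
      unfolding sum_P \<sigma>_def using cut_vector_glue_cut(2)[OF assms(1-3) _ _ \<open>e \<in> E2\<close>] by simp
    also have "\<dots> = x e"
      using fun_cong[OF xb, of e] \<open>e \<in> E2\<close> a(2)
      by (simp add: mult.assoc sum_distrib_left[symmetric] sum_distrib_right[symmetric])
    finally show ?thesis ..
  qed
  then have "x = (\<lambda>e\<in>?E. \<Sum>p\<in>?P. c p * cut_vector ?E (\<sigma> p) e)"
    using x by (auto simp: space_PiM PiE_def extensional_def)
  also have "\<dots> \<in> cut_polytope (V1 \<union> V2) ?E"
  proof (rule convex_combination_in_cut_polytope)
    show "finite (V1 \<union> V2)" "finite ?P"
      using assms(1,2) by (auto simp: simple_graph_def)
    show "\<sigma> ` ?P \<subseteq> Pow (V1 \<union> V2)"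
      by (auto simp: \<sigma>_def glue_cut_def split: if_splits)
    show "\<forall>p\<in>?P. 0 \<le> c p"
      using a(1) b(1) by (auto simp: c_def)
    show "sum c ?P = 1"
      using sum_P[of "\<lambda>_. 1"] a(2) b(2) by (simp add: sum_product[symmetric])
  qed
  finally show ?thesis .
qed

lemma cut_polytope_Un:
  assumes "simple_graph V1 E1" "simple_graph V2 E2" "V1 \<inter> V2 \<subseteq> {w}"
  shows "cut_polytope (V1 \<union> V2) (E1 \<union> E2) =
    {x \<in> space (PiM (E1 \<union> E2) (\<lambda>_. lborel)).
       restrict x E1 \<in> cut_polytope V1 E1 \<and> restrict x E2 \<in> cut_polytope V2 E2}"
proof (intro equalityI subsetI CollectI conjI)
  fix x assume x: "x \<in> cut_polytope (V1 \<union> V2) (E1 \<union> E2)"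
  have finite: "finite (V1 \<union> V2)"
    using assms(1,2) by (simp add: simple_graph_def)
  show "restrict x E1 \<in> cut_polytope V1 E1"
    by (rule restrict_in_cut_polytope[OF finite _ _ _ x]) (use assms(1) in \<open>auto simp: simple_graph_def\<close>)
  show "restrict x E2 \<in> cut_polytope V2 E2"
    by (rule restrict_in_cut_polytope[OF finite _ _ _ x]) (use assms(2) in \<open>auto simp: simple_graph_def\<close>)
  show "x \<in> space (PiM (E1 \<union> E2) (\<lambda>_. lborel))"
    using x cut_polytope_subset_space by blast
next
  fix x assume "x \<in> {x \<in> space (PiM (E1 \<union> E2) (\<lambda>_. lborel)).
      restrict x E1 \<in> cut_polytope V1 E1 \<and> restrict x E2 \<in> cut_polytope V2 E2}"
  then show "x \<in> cut_polytope (V1 \<union> V2) (E1 \<union> E2)"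
    using glue_in_cut_polytope[OF assms] by blast
qed

lemma cut_volume_Un:
  assumes "simple_graph V1 E1" "simple_graph V2 E2" "V1 \<inter> V2 \<subseteq> {w}"
  shows "cut_volume (V1 \<union> V2) (E1 \<union> E2) = cut_volume V1 E1 * cut_volume V2 E2"
proof -
  interpret product_sigma_finite "\<lambda>_. lborel :: real measure"
    by (simp add: product_sigma_finite_def sigma_finite_lborel)
  have finite_edges: "finite E" if "simple_graph V E" for V :: "'a set" and E
    using that unfolding simple_graph_def by (meson PowI finite_Pow_iff finite_subset subsetI)
  note fin = finite_edges[OF assms(1)] finite_edges[OF assms(2)]
  have disj: "E1 \<inter> E2 = {}"
  proof (intro equals0I)
    fix e assume "e \<in> E1 \<inter> E2"
    then have "e \<subseteq> {w}" "card e = 2"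
      using assms unfolding simple_graph_def by blast+
    then show False
      using card_mono[of "{w}" e] by simp
  qed
  show ?thesis
    unfolding cut_volume_def cut_polytope_Un[OF assms]
    by (rule measure_PiM_Un_restrict[OF disj fin sets_cut_polytope sets_cut_polytope])
      (use fin in \<open>simp_all add: countable_finite\<close>)
qed

lemma simple_graph_if_is_cycle:
  assumes "is_cycle W F"
  shows "simple_graph W F"
proof -
  obtain m f where m: "3 \<le> m" and f: "bij_betw f {0..<m} W"
    and F: "F = {{f k, f (Suc k mod m)} | k. k < m}"
    using assms unfolding is_cycle_def by blast
  have "f k \<noteq> f (Suc k mod m)" if "k < m" for k
  proof -
    have "k \<noteq> Suc k mod m"
      using that m by (cases "Suc k = m") auto
    then show ?thesis
      using that f by (auto simp: bij_betw_def dest: inj_onD)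
  qed
  moreover have "f k \<in> W" if "k < m" for k
    using that f by (auto simp: bij_betw_def)
  moreover have "finite W"
    using bij_betw_finite[OF f] by simp
  ultimately show ?thesis
    by (auto simp: simple_graph_def F)
qed

lemma cut_volume_attach_at_vertices:
  assumes "simple_graph V E" "finite A"
    and "\<And>v. v \<in> A \<Longrightarrow> simple_graph (W v) (F v)"
    and "\<And>v. v \<in> A \<Longrightarrow> W v \<inter> V \<subseteq> {v}"
    and "\<And>v u. v \<in> A \<Longrightarrow> u \<in> A \<Longrightarrow> v \<noteq> u \<Longrightarrow> W v \<inter> W u = {}"
  shows "cut_volume (V \<union> (\<Union>v\<in>A. W v)) (E \<union> (\<Union>v\<in>A. F v))
      = cut_volume V E * (\<Prod>v\<in>A. cut_volume (W v) (F v))"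
  using assms(2-)
proof (induction A rule: finite_induct)
  case empty
  then show ?case by simp
next
  case (insert a A)
  let ?V = "V \<union> (\<Union>v\<in>A. W v)" and ?E = "E \<union> (\<Union>v\<in>A. F v)"
  have "simple_graph ?V ?E"
    using assms(1) insert.prems(1) insert.hyps(1) unfolding simple_graph_def by fastforce
  moreover have "?V \<inter> W a \<subseteq> {a}"
    using insert.prems(2,3) insert.hyps(2) by fastforce
  ultimately have "cut_volume (?V \<union> W a) (?E \<union> F a) = cut_volume ?V ?E * cut_volume (W a) (F a)"
    using insert.prems(1) by (intro cut_volume_Un) auto
  moreover have "cut_volume ?V ?E = cut_volume V E * (\<Prod>v\<in>A. cut_volume (W v) (F v))"
    using insert by simp
  ultimately show ?case
    using insert.hyps by (simp add: Un_ac mult_ac)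
qed

theorem proposition7:
  fixes W0 :: "'v set" and F0 :: "'v set set"
    and W :: "'v \<Rightarrow> 'v set" and F :: "'v \<Rightarrow> 'v set set"
  assumes "is_cycle W0 F0"
    and "\<And>v. v \<in> W0 \<Longrightarrow> is_cycle (W v) (F v)"
    and "\<And>v. v \<in> W0 \<Longrightarrow> W v \<inter> W0 = {v}"
    and "\<And>v w. v \<in> W0 \<Longrightarrow> w \<in> W0 \<Longrightarrow> v \<noteq> w \<Longrightarrow> W v \<inter> W w = {}"
  shows "cut_volume (W0 \<union> (\<Union>v\<in>W0. W v)) (F0 \<union> (\<Union>v\<in>W0. F v))
           = cut_volume W0 F0 * (\<Prod>v\<in>W0. cut_volume (W v) (F v))"
proof (rule cut_volume_attach_at_vertices)
  show "simple_graph W0 F0"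
    using assms(1) by (rule simple_graph_if_is_cycle)
  then show "finite W0"
    by (simp add: simple_graph_def)
  show "simple_graph (W v) (F v)" if "v \<in> W0" for v
    using assms(2)[OF that] by (rule simple_graph_if_is_cycle)
  show "W v \<inter> W0 \<subseteq> {v}" if "v \<in> W0" for v
    using assms(3)[OF that] by simp
qed (use assms(4) in blast)

end
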